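(* Let $G$ be a signed cyclic graph and let $D_G$ be one of the virtual link diagrams associated with $G$ via the medial construction. Then $F[G](A,B,d)=\langle D_G\rangle(A,B,d)$.
   Context: A signed cyclic graph is a finite graph with a cyclic ordering of half-edges at each vertex (equivalently an orientable ribbon graph $\mathbf{G}_r$: vertex discs with edge ribbons attached in the given cyclic order) and a sign $\pm$ on each edge. Medial construction: embed $G$ cellularly in a closed oriented surface, place a real crossing at the midpoint of each edge $e$ and join crossings around faces; for positive $e$ the $B$-smoothing of the crossing separates the sides along $e$ (following the vertex boundaries) and the $A$-smoothing connects across $e$, for negative $e$ the roles are exchanged. Generically immersing in the plane with immersion artefacts as virtual crossings gives the virtual link diagrams associated with $G$. Bracket polynomial: for a virtual link diagram $D$, $\langle D\rangle(A,B,d)=\sum_{\sigma}A^{\alpha(\sigma)}B^{\beta(\sigma)}d^{|\sigma|-1}$, the sum over all states $\sigma$ (choices of $A$- or $B$-smoothing at every real crossing, virtual crossings left as is), $\alpha(\sigma),\beta(\sigma)$ the numbers of $A$- and $B$-smoothings, $|\sigma|$ the number of closed curves. The polynomial $F[G]$: edges may be "marked". For an edge $e$, $G-e$ deletes $e$ and $G(\bar e)$ keeps $e$ and marks it. Then $F[G]=B\,F[G-e]+A\,F[G(\bar e)]$ if $e$ is positive and $F[G]=A\,F[G-e]+B\,F[G(\bar e)]$ if $e$ is negative (applied to unmarked edges); and if $H$ is a spanning subgraph of $G$ (all vertices, a subset of edges with the induced cyclic order) all of whose edges are marked, $F[H]=d^{bc(H)-1}$, where $bc(H)$ is the number of boundary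 components of the ribbon graph $\mathbf{H}_r$ of $H$. *)

theory Defs
  imports Main
begin

text \<open>A signed cyclic graph is given by a vertex set V, a set H of half-edges (darts),
 the incidence map vert, a fixed-point-free involution alpha on H pairing the two
 half-edges of each edge (loops and multiple edges allowed), a permutation sigma of H
 whose cycles are exactly the cyclic orders of the half-edges at each vertex, and
 a sign on half-edges constant on edges (True = positive).\<close>

definition signed_cyclic_graph ::
  "'v set \<Rightarrow> 'd set \<Rightarrow> ('d \<Rightarrow> 'v) \<Rightarrow> ('d \<Rightarrow> 'd) \<Rightarrow> ('d \<Rightarrow> 'd) \<Rightarrow> ('d \<Rightarrow> bool) \<Rightarrow> bool" where
  "signed_cyclic_graph V H vert alpha sigma sg \<longleftrightarrow>
     finite V \<and> finite H \<and>
     (\<forall>h\<in>H. vert h \<in> V) \<and>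
     (\<forall>h\<in>H. alpha h \<in> H \<and> alpha h \<noteq> h \<and> alpha (alpha h) = h) \<and>
     bij_betw sigma H H \<and>
     (\<forall>h\<in>H. vert (sigma h) = vert h) \<and>
     (\<forall>h\<in>H. \<forall>h'\<in>H. vert h = vert h' \<longrightarrow> (\<exists>n. (sigma ^^ n) h = h')) \<and>
     (\<forall>h\<in>H. sg (alpha h) = sg h)"

text \<open>Cyclic order induced on a subset S of half-edges (spanning subgraph).\<close>
definition rot_on :: "'d set \<Rightarrow> ('d \<Rightarrow> 'd) \<Rightarrow> 'd \<Rightarrow> 'd" where
  "rot_on S sigma h = (sigma ^^ (LEAST k. 0 < k \<and> (sigma ^^ k) h \<in> S)) h"

definition orbit_count :: "'d set \<Rightarrow> ('d \<Rightarrow> 'd) \<Rightarrow> nat" where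
  "orbit_count S f = card (S // {(x, y). x \<in> S \<and> y \<in> S \<and> (\<exists>n. (f ^^ n) x = y)})"

text \<open>Number of boundary components of the ribbon graph of the spanning subgraph with
 half-edge set S: the face cycles (orbits of the induced rotation composed with alpha)
 plus one boundary circle for each vertex carrying no half-edge of S.\<close>
definition bc :: "'v set \<Rightarrow> ('d \<Rightarrow> 'v) \<Rightarrow> ('d \<Rightarrow> 'd) \<Rightarrow> ('d \<Rightarrow> 'd) \<Rightarrow> 'd set \<Rightarrow> nat" where
  "bc V vert alpha sigma S =
     orbit_count S (rot_on S sigma \<circ> alpha) + card {v \<in> V. \<forall>h\<in>S. vert h \<noteq> v}"

text \<open>The polynomial F[G], via its defining recursion. F_rel ... S M v means: the
 spanning subgraph with half-edge set S, whose edges with half-edges in M are marked,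
 has F-value v (any order of applying the recursion).\<close>
inductive F_rel :: "'v set \<Rightarrow> ('d \<Rightarrow> 'v) \<Rightarrow> ('d \<Rightarrow> 'd) \<Rightarrow> ('d \<Rightarrow> 'd) \<Rightarrow> ('d \<Rightarrow> bool)
    \<Rightarrow> 'a::comm_ring_1 \<Rightarrow> 'a \<Rightarrow> 'a \<Rightarrow> 'd set \<Rightarrow> 'd set \<Rightarrow> 'a \<Rightarrow> bool"
  for V vert alpha sigma sg A B d where
  all_marked: "M = S \<Longrightarrow> F_rel V vert alpha sigma sg A B d S M (d ^ (bc V vert alpha sigma S - 1))"
| pos: "\<lbrakk>h \<in> S; h \<notin> M; sg h;
         F_rel V vert alpha sigma sg A B d (S - {h, alpha h}) M v1;
         F_rel V vert alpha sigma sg A B d S (M \<union> {h, alpha h}) v2\<rbrakk>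
        \<Longrightarrow> F_rel V vert alpha sigma sg A B d S M (B * v1 + A * v2)"
| neg: "\<lbrakk>h \<in> S; h \<notin> M; \<not> sg h;
         F_rel V vert alpha sigma sg A B d (S - {h, alpha h}) M v1;
         F_rel V vert alpha sigma sg A B d S (M \<union> {h, alpha h}) v2\<rbrakk>
        \<Longrightarrow> F_rel V vert alpha sigma sg A B d S M (A * v1 + B * v2)"

text \<open>A virtual link diagram, up to the data relevant for state curves: a finite set X of
 real crossings, each with four ends (c,0),(c,1),(c,2),(c,3) in counterclockwise order,
 labelled so that the A-smoothing joins 0-1 and 2-3 and the B-smoothing joins 1-2 and 3-0;
 a fixed-point-free involution arc on ends (the arcs of the diagram between real crossings,
 passing through virtual crossings), and a number of crossingless closed components.\<close>

definition vends :: "'c set \<Rightarrow> ('c \<times> nat) set" where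
  "vends X = X \<times> {0..<4}"

definition virtual_link_diagram :: "'c set \<Rightarrow> ('c \<times> nat \<Rightarrow> 'c \<times> nat) \<Rightarrow> bool" where
  "virtual_link_diagram X arc \<longleftrightarrow> finite X \<and>
     (\<forall>x\<in>vends X. arc x \<in> vends X \<and> arc x \<noteq> x \<and> arc (arc x) = x)"

definition smA :: "'c \<times> nat \<Rightarrow> 'c \<times> nat" where
  "smA x = (fst x, [1,0,3,2] ! snd x)"

definition smB :: "'c \<times> nat \<Rightarrow> 'c \<times> nat" where
  "smB x = (fst x, [3,2,1,0] ! snd x)"

definition smooth :: "'c set \<Rightarrow> 'c \<times> nat \<Rightarrow> 'c \<times> nat" where
  "smooth s x = (if fst x \<in> s then smA x else smB x)"

definition state_rel :: "'c set \<Rightarrow> ('c \<times> nat \<Rightarrow> 'c \<times> nat) \<Rightarrow> 'c set \<Rightarrow> ('c \<times> nat) rel" where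
  "state_rel X arc s =
     ({(x, arc x) | x. x \<in> vends X} \<union> {(x, smooth s x) | x. x \<in> vends X})"

definition num_curves :: "'c set \<Rightarrow> ('c \<times> nat \<Rightarrow> 'c \<times> nat) \<Rightarrow> nat \<Rightarrow> 'c set \<Rightarrow> nat" where
  "num_curves X arc loops s =
     card (vends X // ((state_rel X arc s \<union> (state_rel X arc s)\<inverse>)\<^sup>*)) + loops"

definition bracket :: "'c set \<Rightarrow> ('c \<times> nat \<Rightarrow> 'c \<times> nat) \<Rightarrow> nat
    \<Rightarrow> 'a::comm_ring_1 \<Rightarrow> 'a \<Rightarrow> 'a \<Rightarrow> 'a" where
  "bracket X arc loops A B d =
     (\<Sum>s\<in>Pow X. A ^ card s * B ^ card (X - s) * d ^ (num_curves X arc loops s - 1))"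

text \<open>The ends of the medial crossing on the edge of half-edge h are (h,True), the strand
 towards the corner between h and sigma h, and (h,False), the strand towards the corner
 between the predecessor of h and h (for both half-edges h of the edge). Medial arcs run
 around the corners: (h,True) is joined to (sigma h,False). For positive edges the
 B-smoothing keeps the sides of the edge separated, following the vertex boundaries
 ((h,b) with (h,\<not>b)), and the A-smoothing connects across the edge ((h,b) with
 (alpha h,\<not>b)); for negative edges the roles are exchanged. An isolated vertex gives a
 crossingless circle.\<close>

definition medial_associated ::
  "'v set \<Rightarrow> 'd set \<Rightarrow> ('d \<Rightarrow> 'v) \<Rightarrow> ('d \<Rightarrow> 'd) \<Rightarrow> ('d \<Rightarrow> 'd) \<Rightarrow> ('d \<Rightarrow> bool)
   \<Rightarrow> 'c set \<Rightarrow> ('c \<times> nat \<Rightarrow> 'c \<times> nat) \<Rightarrow> nat \<Rightarrow> bool" where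
  "medial_associated V H vert alpha sigma sg X arc loops \<longleftrightarrow>
     virtual_link_diagram X arc \<and>
     loops = card {v \<in> V. \<forall>h\<in>H. vert h \<noteq> v} \<and>
     (\<exists>\<mu> :: 'd \<times> bool \<Rightarrow> 'c \<times> nat.
        bij_betw \<mu> (H \<times> UNIV) (vends X) \<and>
        (\<forall>h\<in>H. \<forall>b b'. fst (\<mu> (h, b)) = fst (\<mu> (alpha h, b'))) \<and>
        (\<forall>h\<in>H. \<forall>h'\<in>H. \<forall>b b'. fst (\<mu> (h, b)) = fst (\<mu> (h', b')) \<longrightarrow> h' = h \<or> h' = alpha h) \<and>
        (\<forall>h\<in>H. arc (\<mu> (h, True)) = \<mu> (sigma h, False)) \<and>
        (\<forall>h\<in>H. \<forall>b. smA (\<mu> (h, b)) = \<mu> (if sg h then (alpha h, \<not> b) else (h, \<not> b))) \<and>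
        (\<forall>h\<in>H. \<forall>b. smB (\<mu> (h, b)) = \<mu> (if sg h then (h, \<not> b) else (alpha h, \<not> b))))"

end

theory Submission
  imports Defs
begin

text \<open>Both sides are sums over the ways of keeping or deleting each edge, i.e.\ of smoothing
  each medial crossing across or along its edge. The recursion for \<open>F\<close> has the closed form
  \<open>state_sum\<close> over the spanning subgraph \<open>S\<close> with marked part \<open>M\<close>, which satisfies the
  recursion and is therefore its only solution. For a state \<open>s\<close>, the state curves, traced on the
  ends of the crossings by the permutation \<open>boundary_step\<close>, are the boundary components of the
  ribbon subgraph of kept edges: an orbit through a kept half-edge is cut by its returns to the
  kept half-edges into a face cycle of \<open>rot_on \<circ> alpha\<close>, and every other orbit runs once around a
  vertex that has lost all its edges. So the number of curves is \<open>bc\<close>, and the weights match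
  crossing by crossing.\<close>

section \<open>Orbits of a permutation of a finite set\<close>

definition orbit_rel :: "'a set \<Rightarrow> ('a \<Rightarrow> 'a) \<Rightarrow> 'a rel" where
  "orbit_rel S f = {(x, y). x \<in> S \<and> y \<in> S \<and> (\<exists>n. (f ^^ n) x = y)}"

lemma orbit_count_eq_card_quotient: "orbit_count S f = card (S // orbit_rel S f)"
  by (simp add: orbit_count_def orbit_rel_def)

lemma orbit_rel_subset: "orbit_rel S f \<subseteq> S \<times> S"
  by (auto simp: orbit_rel_def)

lemma funpow_in_invariant: "f ` S \<subseteq> S \<Longrightarrow> x \<in> S \<Longrightarrow> (f ^^ n) x \<in> S"
  by (induction n) auto

lemma funpow_periodic:
  assumes "finite S" "bij_betw f S S" "x \<in> S"
  obtains p where "p > 0" "(f ^^ p) x = x"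
proof -
  have "range (\<lambda>n. (f ^^ n) x) \<subseteq> S"
    using bij_betwE[OF bij_betw_funpow[OF assms(2)]] assms(3) by blast
  then have "finite (range (\<lambda>n. (f ^^ n) x))"
    using assms(1) finite_subset by blast
  then have "\<not> inj (\<lambda>n. (f ^^ n) x)"
    using finite_imageD infinite_UNIV_nat by blast
  then obtain i j where "i \<noteq> j" "(f ^^ i) x = (f ^^ j) x"
    unfolding inj_def by blast
  then obtain i j where ij: "i < j" "(f ^^ i) x = (f ^^ j) x"
    by (metis linorder_neq_iff)
  have "(f ^^ j) x = (f ^^ (i + (j - i))) x"
    using ij(1) by simp
  also have "\<dots> = (f ^^ i) ((f ^^ (j - i)) x)"
    by (simp only: funpow_add o_apply)
  finally have "(f ^^ i) ((f ^^ (j - i)) x) = (f ^^ i) x"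
    using ij(2) by simp
  moreover have "inj_on (f ^^ i) S"
    using bij_betw_funpow[OF assms(2)] bij_betw_imp_inj_on by blast
  moreover have "(f ^^ (j - i)) x \<in> S"
    using bij_betwE[OF bij_betw_funpow[OF assms(2)]] assms(3) by blast
  ultimately have "(f ^^ (j - i)) x = x"
    using assms(3) by (blast dest: inj_onD)
  with ij(1) show ?thesis
    by (intro that[of "j - i"]) auto
qed

lemma equiv_orbit_rel:
  assumes "finite S" "bij_betw f S S"
  shows "equiv S (orbit_rel S f)"
proof (rule equivI)
  show "refl_on S (orbit_rel S f)"
    unfolding refl_on_def orbit_rel_def by (auto intro: exI[of _ 0])
  show "trans (orbit_rel S f)"
    unfolding trans_def orbit_rel_def
  proof clarsimp
    fix x m n
    show "\<exists>k. (f ^^ k) x = (f ^^ n) ((f ^^ m) x)"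
      by (rule exI[of _ "n + m"]) (simp add: funpow_add)
  qed
  show "sym (orbit_rel S f)"
    unfolding sym_def orbit_rel_def
  proof clarsimp
    fix x n assume "x \<in> S"
    then obtain p where p: "p > 0" "(f ^^ p) x = x"
      using funpow_periodic[OF assms] by blast
    have "(f ^^ (p * n - n)) ((f ^^ n) x) = (f ^^ (p * n - n + n)) x"
      by (simp add: funpow_add)
    also have "p * n - n + n = p * n"
      using p(1) by (cases p) auto
    also have "(f ^^ (p * n)) x = x"
      using funpow_mod_eq[OF p(2), of "p * n"] by simp
    finally show "\<exists>m. (f ^^ m) ((f ^^ n) x) = x" ..
  qed
qed (rule orbit_rel_subset)

lemma card_quotient_bij_betw:
  assumes bij: "bij_betw \<phi> U U'" and R: "R \<subseteq> U \<times> U"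
    and classes: "\<And>x. x \<in> U \<Longrightarrow> R' `` {\<phi> x} = \<phi> ` (R `` {x})"
  shows "card (U' // R') = card (U // R)"
proof -
  have "U' = \<phi> ` U"
    using bij bij_betw_imp_surj_on by metis
  then have "U' // R' = (\<Union>x\<in>U. {\<phi> ` (R `` {x})})"
    unfolding quotient_def using classes by simp
  also have "\<dots> = image \<phi> ` (U // R)"
    unfolding quotient_def by blast
  finally have quotient_eq: "U' // R' = image \<phi> ` (U // R)" .
  have "U // R \<subseteq> Pow U"
    using R unfolding quotient_def by blast
  then have "inj_on (image \<phi>) (U // R)"
    using inj_on_image_Pow[OF bij_betw_imp_inj_on[OF bij]] inj_on_subset by blast
  then show ?thesis
    unfolding quotient_eq by (simp add: card_image)
qed

lemma card_orbit_quotient_conj: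
  assumes bij: "bij_betw \<phi> U U'" and f: "f ` U \<subseteq> U"
    and conj: "\<And>x. x \<in> U \<Longrightarrow> \<phi> (f x) = f' (\<phi> x)"
  shows "card (U' // orbit_rel U' f') = card (U // orbit_rel U f)"
proof (rule card_quotient_bij_betw[OF bij orbit_rel_subset])
  have conj_funpow: "\<phi> ((f ^^ n) x) = (f' ^^ n) (\<phi> x)" if "x \<in> U" for x n
    by (induction n) (simp_all add: conj funpow_in_invariant[OF f that])
  have \<phi>_in: "\<phi> x \<in> U'" if "x \<in> U" for x
    using bij that bij_betwE by blast
  fix x assume x: "x \<in> U"
  show "orbit_rel U' f' `` {\<phi> x} = \<phi> ` (orbit_rel U f `` {x})"
    using x conj_funpow \<phi>_in funpow_in_invariant[OF f x]
    unfolding orbit_rel_def by (auto simp flip: conj_funpow)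
qed

definition first_return_time :: "('a \<Rightarrow> 'a) \<Rightarrow> 'a set \<Rightarrow> 'a \<Rightarrow> nat \<Rightarrow> bool" where
  "first_return_time f T x k \<longleftrightarrow>
     0 < k \<and> (f ^^ k) x \<in> T \<and> (\<forall>j. 0 < j \<and> j < k \<longrightarrow> (f ^^ j) x \<notin> T)"

lemma first_return_time_LEAST:
  assumes "finite S" "bij_betw f S S" "T \<subseteq> S" "t \<in> T"
  defines "k \<equiv> LEAST k. 0 < k \<and> (f ^^ k) t \<in> T"
  shows "first_return_time f T t k"
proof -
  obtain p where "p > 0" "(f ^^ p) t = t"
    using funpow_periodic[OF assms(1,2)] assms(3,4) by blast
  then have "\<exists>k. 0 < k \<and> (f ^^ k) t \<in> T"
    using assms(4) by metis
  then show ?thesis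
    unfolding first_return_time_def k_def by (metis (mono_tags, lifting) LeastI_ex not_less_Least)
qed

locale first_return_map =
  fixes U :: "'a set" and f :: "'a \<Rightarrow> 'a" and T :: "'a set" and g :: "'a \<Rightarrow> 'a"
  assumes finite: "finite U" and bij: "bij_betw f U U" and subset: "T \<subseteq> U"
    and returns: "\<And>x. x \<in> T \<Longrightarrow> \<exists>k. first_return_time f T x k \<and> g x = (f ^^ k) x"
begin

lemma g_in: "x \<in> T \<Longrightarrow> g x \<in> T"
  using returns unfolding first_return_time_def by metis

lemma funpow_g_eq_funpow: "t \<in> T \<Longrightarrow> \<exists>n. (f ^^ n) t = (g ^^ m) t"
proof (induction m)
  case 0
  then show ?case by (auto intro: exI[of _ 0])
next
  case (Suc m)
  then obtain n where n: "(f ^^ n) t = (g ^^ m) t"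
    by blast
  have "(g ^^ m) t \<in> T"
    using funpow_in_invariant[of g T] g_in Suc.prems by blast
  then obtain k where "g ((g ^^ m) t) = (f ^^ k) ((g ^^ m) t)"
    using returns by blast
  then have "(g ^^ Suc m) t = (f ^^ (k + n)) t"
    by (simp add: funpow_add n)
  then show ?case
    by metis
qed

lemma funpow_eq_funpow_g:
  "t \<in> T \<Longrightarrow> (f ^^ n) t \<in> T \<Longrightarrow> \<exists>m. (g ^^ m) t = (f ^^ n) t"
proof (induction n arbitrary: t rule: less_induct)
  case (less n)
  show ?case
  proof (cases "n = 0")
    case True
    then show ?thesis by (auto intro: exI[of _ 0])
  next
    case False
    obtain k where k: "first_return_time f T t k" "g t = (f ^^ k) t"
      using returns less.prems(1) by blast
    have "k \<le> n"
      using k(1) less.prems(2) False unfolding first_return_time_def by (meson not_le not_gr_zero)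
    then have "(f ^^ n) t = (f ^^ (n - k)) (g t)"
      using k(2) by (metis funpow_add le_add_diff_inverse2 o_apply)
    moreover have "n - k < n"
      using k(1) \<open>k \<le> n\<close> False unfolding first_return_time_def by simp
    ultimately obtain m where "(g ^^ m) (g t) = (f ^^ n) t"
      using less.IH g_in less.prems by metis
    then have "(g ^^ Suc m) t = (f ^^ n) t"
      by (simp add: funpow_Suc_right del: funpow.simps)
    then show ?thesis
      by blast
  qed
qed

lemma orbit_class_inter:
  assumes "t \<in> T"
  shows "orbit_rel U f `` {t} \<inter> T = orbit_rel T g `` {t}"
  using assms subset funpow_eq_funpow_g funpow_g_eq_funpow funpow_in_invariant[of g T, OF _ assms] g_in
  unfolding orbit_rel_def by (fastforce simp: image_subset_iff)

theorem card_orbits: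
  "card (U // orbit_rel U f) =
     card (T // orbit_rel T g) + card {Q \<in> U // orbit_rel U f. Q \<inter> T = {}}"
proof -
  let ?E = "orbit_rel U f"
  have eqv: "equiv U ?E"
    using equiv_orbit_rel[OF finite bij] .
  have "finite (U // ?E)"
    using finite_quotient[OF finite] eqv unfolding equiv_def refl_on_def by blast
  then have split: "card (U // ?E) =
      card {Q \<in> U // ?E. Q \<inter> T \<noteq> {}} + card {Q \<in> U // ?E. Q \<inter> T = {}}"
    by (subst card_Un_disjoint[symmetric]) (auto intro: arg_cong[where f = card])
  have "bij_betw (\<lambda>Q. Q \<inter> T) {Q \<in> U // ?E. Q \<inter> T \<noteq> {}} (T // orbit_rel T g)"
  proof (rule bij_betwI')
    fix Q1 Q2 assume "Q1 \<in> {Q \<in> U // ?E. Q \<inter> T \<noteq> {}}" "Q2 \<in> {Q \<in> U // ?E. Q \<inter> T \<noteq> {}}"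
    then show "(Q1 \<inter> T = Q2 \<inter> T) = (Q1 = Q2)"
      using quotient_disj[OF eqv] by blast
  next
    fix Q assume Q: "Q \<in> {Q \<in> U // ?E. Q \<inter> T \<noteq> {}}"
    then obtain t where t: "t \<in> Q" "t \<in> T"
      by auto
    obtain x where "x \<in> U" "Q = ?E `` {x}"
      using Q by (auto elim!: quotientE)
    then have "Q = ?E `` {t}"
      using t(1) equiv_class_eq[OF eqv] by auto
    then show "Q \<inter> T \<in> T // orbit_rel T g"
      using orbit_class_inter[OF t(2)] t(2) unfolding quotient_def by auto
  next
    fix Y assume "Y \<in> T // orbit_rel T g"
    then obtain t where t: "t \<in> T" "Y = orbit_rel T g `` {t}"
      unfolding quotient_def by auto
    moreover have "?E `` {t} \<in> U // ?E" "t \<in> ?E `` {t}"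
      using t subset equiv_class_self[OF eqv] unfolding quotient_def by auto
    ultimately show "\<exists>Q\<in>{Q \<in> U // ?E. Q \<inter> T \<noteq> {}}. Y = Q \<inter> T"
      using orbit_class_inter[OF t(1)] by (intro bexI[of _ "?E `` {t}"]) auto
  qed
  with split show ?thesis
    by (simp add: bij_betw_same_card)
qed

end

lemma rtrancl_class_subset_orbit_image:
  assumes step_inverse: "\<And>q z. q \<in> U \<Longrightarrow> (\<phi> q, z) \<in> R \<union> R\<inverse> \<Longrightarrow>
                 \<exists>q'\<in>U. z = \<phi> q' \<and> (q' = f q \<or> f q' = q)"
    and fin: "finite U" and bij: "bij_betw f U U" and p: "p \<in> U"
  shows "(R \<union> R\<inverse>)\<^sup>* `` {\<phi> p} \<subseteq> \<phi> ` (orbit_rel U f `` {p})"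
proof
  have eqv: "equiv U (orbit_rel U f)"
    using equiv_orbit_rel[OF fin bij] .
  have f_in: "f q \<in> U" if "q \<in> U" for q
    using bij that bij_betwE by blast
  fix z assume "z \<in> (R \<union> R\<inverse>)\<^sup>* `` {\<phi> p}"
  then have "(\<phi> p, z) \<in> (R \<union> R\<inverse>)\<^sup>*"
    by simp
  then show "z \<in> \<phi> ` (orbit_rel U f `` {p})"
  proof (induction rule: rtrancl_induct)
    case base
    then show ?case
      using equiv_class_self[OF eqv p] by blast
  next
    case (step y z)
    then obtain q where q: "(p, q) \<in> orbit_rel U f" "y = \<phi> q"
      by blast
    then have "q \<in> U"
      unfolding orbit_rel_def by auto
    then obtain q' where q': "q' \<in> U" "z = \<phi> q'" "q' = f q \<or> f q' = q"
      using step_inverse step(2) q(2) by blast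
    have "(q, f q) \<in> orbit_rel U f" "(q', f q') \<in> orbit_rel U f"
      using \<open>q \<in> U\<close> q'(1) f_in unfolding orbit_rel_def by (auto intro: exI[of _ 1])
    then have "(q, q') \<in> orbit_rel U f"
      using q'(3) eqv by (metis equiv_def symD)
    then have "(p, q') \<in> orbit_rel U f"
      using q(1) eqv by (meson equiv_def transD)
    then show ?case
      using q'(2) by blast
  qed
qed

lemma orbit_image_subset_rtrancl_class:
  assumes step: "\<And>q. q \<in> U \<Longrightarrow> (\<phi> q, \<phi> (f q)) \<in> R"
    and bij: "bij_betw f U U" and p: "p \<in> U"
  shows "\<phi> ` (orbit_rel U f `` {p}) \<subseteq> (R \<union> R\<inverse>)\<^sup>* `` {\<phi> p}"
proof
  fix z assume "z \<in> \<phi> ` (orbit_rel U f `` {p})"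
  then obtain n where z: "z = \<phi> ((f ^^ n) p)"
    unfolding orbit_rel_def by blast
  have "(\<phi> p, \<phi> ((f ^^ n) p)) \<in> (R \<union> R\<inverse>)\<^sup>*" for n
  proof (induction n)
    case (Suc n)
    have "(f ^^ n) p \<in> U"
      using bij_betwE[OF bij_betw_funpow[OF bij]] p by blast
    then show ?case
      using Suc step by (auto intro: rtrancl_into_rtrancl)
  qed simp
  then show "z \<in> (R \<union> R\<inverse>)\<^sup>* `` {\<phi> p}"
    using z by simp
qed

section \<open>Boundary components of a ribbon subgraph\<close>

locale signed_ribbon_graph =
  fixes V :: "'v set" and H :: "'d set" and vert :: "'d \<Rightarrow> 'v"
    and alpha sigma :: "'d \<Rightarrow> 'd" and sg :: "'d \<Rightarrow> bool"
  assumes graph: "signed_cyclic_graph V H vert alpha sigma sg"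
begin

lemma finite_V: "finite V" and finite_H: "finite H"
  and vert_in: "h \<in> H \<Longrightarrow> vert h \<in> V"
  and alpha_in: "h \<in> H \<Longrightarrow> alpha h \<in> H"
  and alpha_alpha: "h \<in> H \<Longrightarrow> alpha (alpha h) = h"
  and bij_sigma: "bij_betw sigma H H"
  and vert_sigma: "h \<in> H \<Longrightarrow> vert (sigma h) = vert h"
  and sigma_reaches: "h \<in> H \<Longrightarrow> h' \<in> H \<Longrightarrow> vert h = vert h' \<Longrightarrow> \<exists>n. (sigma ^^ n) h = h'"
  and sg_alpha: "h \<in> H \<Longrightarrow> sg (alpha h) = sg h"
  using graph unfolding signed_cyclic_graph_def by auto

lemma sigma_in: "h \<in> H \<Longrightarrow> sigma h \<in> H"
  using bij_sigma bij_betwE by blast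

end

locale ribbon_subgraph = signed_ribbon_graph V H vert alpha sigma sg
  for V :: "'v set" and H :: "'d set" and vert :: "'d \<Rightarrow> 'v"
    and alpha sigma :: "'d \<Rightarrow> 'd" and sg :: "'d \<Rightarrow> bool" +
  fixes T :: "'d set"
  assumes T_subset: "T \<subseteq> H" and alpha_T: "h \<in> T \<Longrightarrow> alpha h \<in> T"
begin

definition cross :: "'d \<Rightarrow> 'd" where
  "cross h = (if h \<in> T then alpha h else h)"

text \<open>The boundary of the ribbon subgraph, traced on the ends of the medial crossings:
  from \<open>(h, True)\<close> along the corner to \<open>(sigma h, False)\<close>, then through the crossing,
  to the other side of the edge exactly when it belongs to \<open>T\<close>.\<close>
definition boundary_step :: "'d \<times> bool \<Rightarrow> 'd \<times> bool" where
  "boundary_step x = (if snd x then (sigma (fst x), False) else (cross (fst x), True))"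

lemma boundary_step_True [simp]: "boundary_step (h, True) = (sigma h, False)"
  and boundary_step_False [simp]: "boundary_step (h, False) = (cross h, True)"
  by (simp_all add: boundary_step_def)

lemma cross_in: "h \<in> H \<Longrightarrow> cross h \<in> H"
  using alpha_in by (simp add: cross_def)

lemma cross_cross: "h \<in> H \<Longrightarrow> cross (cross h) = h"
  using alpha_alpha alpha_T by (auto simp: cross_def)

lemma boundary_step_in: "x \<in> H \<times> UNIV \<Longrightarrow> boundary_step x \<in> H \<times> UNIV"
  using sigma_in cross_in by (cases x) (auto simp: boundary_step_def)

lemma bij_boundary_step: "bij_betw boundary_step (H \<times> UNIV) (H \<times> UNIV)"
proof -
  have "inj_on boundary_step (H \<times> UNIV)"
  proof (rule inj_onI)
    fix x y assume "x \<in> H \<times> UNIV" "y \<in> H \<times> UNIV" "boundary_step x = boundary_step y"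
    then show "x = y"
      using bij_betw_imp_inj_on[OF bij_sigma] cross_cross
      by (cases x; cases y; cases "snd x"; cases "snd y") (auto dest: inj_onD, metis)
  qed
  moreover have "boundary_step ` (H \<times> UNIV) \<subseteq> H \<times> UNIV"
    using boundary_step_in by blast
  moreover have "finite (H \<times> (UNIV :: bool set))"
    using finite_H by simp
  ultimately show ?thesis
    by (simp add: bij_betw_def endo_inj_surj)
qed

lemma rot_on_first_return:
  assumes "t \<in> T"
  obtains k where "first_return_time sigma T t k" "rot_on T sigma t = (sigma ^^ k) t"
  using first_return_time_LEAST[OF finite_H bij_sigma T_subset assms] that
  unfolding rot_on_def by blast

lemma rot_on_in: "t \<in> T \<Longrightarrow> rot_on T sigma t \<in> T"
  by (metis rot_on_first_return first_return_time_def)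

lemma boundary_step_walk:
  assumes "\<forall>j. 0 < j \<and> j < k \<longrightarrow> (sigma ^^ j) t \<notin> T" and "j < k"
  shows "(boundary_step ^^ (2 * j)) (t, True) = ((sigma ^^ j) t, True)
    \<and> (boundary_step ^^ Suc (2 * j)) (t, True) = ((sigma ^^ Suc j) t, False)"
  using assms(2)
proof (induction j)
  case (Suc j)
  then have "(boundary_step ^^ Suc (2 * j)) (t, True) = ((sigma ^^ Suc j) t, False)"
    by simp
  moreover have "(sigma ^^ Suc j) t \<notin> T"
    using assms(1) Suc.prems by blast
  ultimately show ?case
    by (simp add: cross_def del: funpow.simps) (simp add: cross_def)
qed simp

lemma boundary_walk_avoids_T:
  assumes before: "\<forall>j. 0 < j \<and> j < k \<longrightarrow> (sigma ^^ j) t \<notin> T" and i: "0 < i" "i < 2 * k"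
  shows "(boundary_step ^^ i) (t, True) \<notin> T \<times> {True}"
proof -
  have "i div 2 < k"
    using i by simp
  note walk = boundary_step_walk[OF before this]
  have "i = 2 * (i div 2) \<or> i = Suc (2 * (i div 2))"
    by presburger
  then consider "i = 2 * (i div 2)" "0 < i div 2" | "i = Suc (2 * (i div 2))"
    using i(1) by (metis gr0I mult_0_right)
  then show ?thesis
  proof cases
    case 1
    then have "(sigma ^^ (i div 2)) t \<notin> T"
      using before \<open>i div 2 < k\<close> by blast
    then show ?thesis
      using walk 1 by (metis SigmaD1 fst_conv)
  next
    case 2
    then show ?thesis
      using walk by (metis SigmaD2 singletonD snd_conv)
  qed
qed

definition face_return :: "'d \<times> bool \<Rightarrow> 'd \<times> bool" where
  "face_return x = (alpha (rot_on T sigma (fst x)), True)"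

lemma boundary_step_first_return:
  assumes t: "t \<in> T"
  shows "\<exists>K. first_return_time boundary_step (T \<times> {True}) (t, True) K
           \<and> face_return (t, True) = (boundary_step ^^ K) (t, True)"
proof -
  obtain k where k: "first_return_time sigma T t k" "rot_on T sigma t = (sigma ^^ k) t"
    using rot_on_first_return[OF t] .
  then have k_pos: "0 < k" and k_in: "(sigma ^^ k) t \<in> T"
    and before: "\<forall>j. 0 < j \<and> j < k \<longrightarrow> (sigma ^^ j) t \<notin> T"
    unfolding first_return_time_def by auto
  note walk = boundary_step_walk[OF before]
  obtain k' where k': "k = Suc k'"
    using k_pos not0_implies_Suc by blast
  have "(boundary_step ^^ Suc (2 * k')) (t, True) = ((sigma ^^ k) t, False)"
    using walk[of k'] k' by simp
  then have return: "(boundary_step ^^ (2 * k)) (t, True) = face_return (t, True)"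
    using k_in k' k(2) by (simp add: cross_def face_return_def del: funpow.simps) (simp add: cross_def)
  have "(boundary_step ^^ i) (t, True) \<notin> T \<times> {True}" if "0 < i" "i < 2 * k" for i
    using boundary_walk_avoids_T[OF before that] .
  moreover have "face_return (t, True) \<in> T \<times> {True}"
    using rot_on_in[OF t] alpha_T by (simp add: face_return_def)
  ultimately show ?thesis
    using return k_pos unfolding first_return_time_def
    by (intro exI[of _ "2 * k"]) auto
qed

sublocale boundary_faces: first_return_map "H \<times> UNIV" boundary_step "T \<times> {True}" face_return
  using finite_H bij_boundary_step T_subset boundary_step_first_return
  by unfold_locales auto

lemma card_face_return_orbits:
  "card ((T \<times> {True}) // orbit_rel (T \<times> {True}) face_return) = orbit_count T (rot_on T sigma \<circ> alpha)"
proof -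
  have "bij_betw alpha T T"
    by (rule bij_betw_byWitness[where f' = alpha]) (use alpha_T alpha_alpha T_subset in auto)
  then have "card (T // orbit_rel T (alpha \<circ> rot_on T sigma))
      = card (T // orbit_rel T (rot_on T sigma \<circ> alpha))"
    by (rule card_orbit_quotient_conj) (use rot_on_in alpha_T in auto)
  moreover have "card ((T \<times> {True}) // orbit_rel (T \<times> {True}) face_return)
      = card (T // orbit_rel T (alpha \<circ> rot_on T sigma))"
    by (rule card_orbit_quotient_conj) (use rot_on_in alpha_T in \<open>auto simp: bij_betw_def inj_on_def face_return_def\<close>)
  ultimately show ?thesis
    by (simp add: orbit_count_eq_card_quotient)
qed

abbreviation boundary_rel :: "(('d \<times> bool) \<times> ('d \<times> bool)) set" where
  "boundary_rel \<equiv> orbit_rel (H \<times> UNIV) boundary_step"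

lemma equiv_boundary_rel: "equiv (H \<times> UNIV) boundary_rel"
  using equiv_orbit_rel[OF _ bij_boundary_step] finite_H by simp

lemma boundary_class_closed:
  assumes "y \<in> boundary_rel `` {x}"
  shows "boundary_step y \<in> boundary_rel `` {x}"
proof -
  obtain n where n: "x \<in> H \<times> UNIV" "y \<in> H \<times> UNIV" "(boundary_step ^^ n) x = y"
    using assms unfolding orbit_rel_def by auto
  then have "(boundary_step ^^ Suc n) x = boundary_step y"
    by simp
  moreover have "boundary_step y \<in> H \<times> UNIV"
    using boundary_step_in n(2) .
  ultimately have "(x, boundary_step y) \<in> boundary_rel"
    unfolding orbit_rel_def using n(1) by blast
  then show ?thesis
    by simp
qed

lemma vert_boundary_walk:
  assumes "\<forall>h\<in>T. vert h \<noteq> v" and "x \<in> H \<times> UNIV" "vert (fst x) = v"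
  shows "vert (fst ((boundary_step ^^ n) x)) = v"
proof (induction n)
  case (Suc n)
  obtain h b where hb: "(boundary_step ^^ n) x = (h, b)"
    by fastforce
  have "(boundary_step ^^ n) x \<in> H \<times> UNIV"
    using funpow_in_invariant[of boundary_step "H \<times> UNIV"] boundary_step_in assms(2) by blast
  then have h: "h \<in> H" "vert h = v" "h \<notin> T"
    using hb Suc.IH assms(1) by auto
  then show ?case
    using hb vert_sigma by (cases b) (auto simp: cross_def)
qed (use assms in simp)

lemma boundary_class_at_vertex:
  assumes "\<forall>h\<in>T. vert h \<noteq> v" and "x \<in> H \<times> UNIV" "vert (fst x) = v"
  shows "boundary_rel `` {x} \<subseteq> {y. vert (fst y) = v}"
proof
  fix y assume "y \<in> boundary_rel `` {x}"
  then obtain n where "(boundary_step ^^ n) x = y"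
    unfolding orbit_rel_def by auto
  then show "y \<in> {y. vert (fst y) = v}"
    using vert_boundary_walk[OF assms, of n] by simp
qed

lemma boundary_class_avoiding_T:
  assumes x: "x \<in> H \<times> UNIV" and avoid: "boundary_rel `` {x} \<inter> T \<times> {True} = {}"
    and h: "h \<in> H" "vert h = vert (fst x)"
  shows "(h, True) \<in> boundary_rel `` {x}"
proof -
  let ?Q = "boundary_rel `` {x}"
  have not_T: "fst y \<notin> T" if y: "y \<in> ?Q" for y
  proof
    assume "fst y \<in> T"
    then have "(alpha (fst y), True) \<in> ?Q \<or> y \<in> T \<times> {True}"
      using boundary_class_closed[OF y] by (cases y; cases "snd y") (auto simp: cross_def)
    then show False
      using avoid alpha_T \<open>fst y \<in> T\<close> y by blast
  qed
  obtain g b where xg: "x = (g, b)"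
    by fastforce
  have x_in: "x \<in> ?Q"
    using equiv_class_self[OF equiv_boundary_rel x] .
  have g_in: "(g, True) \<in> ?Q"
    using x_in not_T[OF x_in] boundary_class_closed[OF x_in] xg by (cases b) (auto simp: cross_def)
  have "((sigma ^^ n) g, True) \<in> ?Q" for n
  proof (induction n)
    case 0
    then show ?case using g_in by simp
  next
    case (Suc n)
    have "((sigma ^^ Suc n) g, False) \<in> ?Q"
      using boundary_class_closed[OF Suc.IH] by simp
    moreover have "(sigma ^^ Suc n) g \<notin> T"
      using not_T calculation by fastforce
    ultimately show ?case
      using boundary_class_closed[of "((sigma ^^ Suc n) g, False)"]
      by (simp add: cross_def del: funpow.simps)
  qed
  moreover obtain n where "(sigma ^^ n) g = h"
    using sigma_reaches h x xg by (metis mem_Sigma_iff fst_conv)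
  ultimately show ?thesis
    by blast
qed

definition T_isolated :: "'v set" where
  "T_isolated = {v \<in> V. (\<exists>h\<in>H. vert h = v) \<and> (\<forall>h\<in>T. vert h \<noteq> v)}"

definition half_edge_at :: "'v \<Rightarrow> 'd" where
  "half_edge_at v = (SOME h. h \<in> H \<and> vert h = v)"

lemma half_edge_at: "v \<in> T_isolated \<Longrightarrow> half_edge_at v \<in> H \<and> vert (half_edge_at v) = v"
  unfolding half_edge_at_def T_isolated_def by (rule someI_ex) blast

lemma T_isolated_class_at_vertex:
  "v \<in> T_isolated \<Longrightarrow> boundary_rel `` {(half_edge_at v, True)} \<subseteq> {y. vert (fst y) = v}"
  using half_edge_at by (intro boundary_class_at_vertex) (auto simp: T_isolated_def)

lemma boundary_class_avoiding_T_eq: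
  assumes x: "x \<in> H \<times> UNIV" and avoid: "boundary_rel `` {x} \<inter> T \<times> {True} = {}"
  shows "vert (fst x) \<in> T_isolated"
    and "boundary_rel `` {x} = boundary_rel `` {(half_edge_at (vert (fst x)), True)}"
proof -
  have "\<forall>h\<in>T. vert h \<noteq> vert (fst x)"
  proof (intro ballI notI)
    fix h assume "h \<in> T" "vert h = vert (fst x)"
    then have "(h, True) \<in> boundary_rel `` {x}"
      using boundary_class_avoiding_T[OF x avoid] T_subset by blast
    with avoid \<open>h \<in> T\<close> show False
      by blast
  qed
  then show v: "vert (fst x) \<in> T_isolated"
    using x vert_in unfolding T_isolated_def by auto
  then have "(half_edge_at (vert (fst x)), True) \<in> boundary_rel `` {x}"
    using boundary_class_avoiding_T[OF x avoid] half_edge_at by simp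
  then show "boundary_rel `` {x} = boundary_rel `` {(half_edge_at (vert (fst x)), True)}"
    using x equiv_class_eq[OF equiv_boundary_rel] by blast
qed

lemma card_boundary_classes_avoiding_T:
  "card {Q \<in> (H \<times> UNIV) // boundary_rel. Q \<inter> T \<times> {True} = {}} = card T_isolated"
proof -
  let ?class = "\<lambda>v. boundary_rel `` {(half_edge_at v, True)}"
  have "bij_betw ?class T_isolated {Q \<in> (H \<times> UNIV) // boundary_rel. Q \<inter> T \<times> {True} = {}}"
  proof (rule bij_betwI')
    fix v w assume v: "v \<in> T_isolated" and w: "w \<in> T_isolated"
    show "(?class v = ?class w) = (v = w)"
    proof
      assume "?class v = ?class w"
      moreover have "(half_edge_at w, True) \<in> ?class w"
        using equiv_class_self[OF equiv_boundary_rel] half_edge_at[OF w] by simp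
      ultimately have "vert (half_edge_at w) = v"
        using T_isolated_class_at_vertex[OF v] by auto
      then show "v = w"
        using half_edge_at[OF w] by simp
    qed simp
  next
    fix v assume v: "v \<in> T_isolated"
    then have "\<forall>h\<in>T. vert h \<noteq> v"
      by (simp add: T_isolated_def)
    then show "?class v \<in> {Q \<in> (H \<times> UNIV) // boundary_rel. Q \<inter> T \<times> {True} = {}}"
      using half_edge_at[OF v] T_isolated_class_at_vertex[OF v] unfolding quotient_def by auto
  next
    fix Q assume "Q \<in> {Q \<in> (H \<times> UNIV) // boundary_rel. Q \<inter> T \<times> {True} = {}}"
    then obtain x where "x \<in> H \<times> UNIV" "Q = boundary_rel `` {x}" "Q \<inter> T \<times> {True} = {}"
      by (auto elim!: quotientE)
    then show "\<exists>v\<in>T_isolated. Q = ?class v"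
      using boundary_class_avoiding_T_eq by blast
  qed
  then show ?thesis
    by (simp add: bij_betw_same_card)
qed

theorem card_boundary_orbits:
  "card ((H \<times> UNIV) // boundary_rel) + card {v \<in> V. \<forall>h\<in>H. vert h \<noteq> v}
     = bc V vert alpha sigma T"
proof -
  have "{v \<in> V. \<forall>h\<in>T. vert h \<noteq> v} = T_isolated \<union> {v \<in> V. \<forall>h\<in>H. vert h \<noteq> v}"
    unfolding T_isolated_def using T_subset by blast
  then have "card {v \<in> V. \<forall>h\<in>T. vert h \<noteq> v} = card T_isolated + card {v \<in> V. \<forall>h\<in>H. vert h \<noteq> v}"
    using finite_V by (simp add: card_Un_disjoint T_isolated_def disjoint_iff)
  then show ?thesis
    unfolding bc_def using boundary_faces.card_orbits card_face_return_orbits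
      card_boundary_classes_avoiding_T by simp
qed

end

section \<open>State curves of the medial diagram\<close>

locale medial_diagram = signed_ribbon_graph V H vert alpha sigma sg
  for V :: "'v set" and H :: "'d set" and vert :: "'d \<Rightarrow> 'v"
    and alpha sigma :: "'d \<Rightarrow> 'd" and sg :: "'d \<Rightarrow> bool" +
  fixes X :: "'c set" and arc :: "'c \<times> nat \<Rightarrow> 'c \<times> nat" and loops :: nat
    and mu :: "'d \<times> bool \<Rightarrow> 'c \<times> nat"
  assumes diagram: "virtual_link_diagram X arc"
    and loops: "loops = card {v \<in> V. \<forall>h\<in>H. vert h \<noteq> v}"
    and bij_mu: "bij_betw mu (H \<times> UNIV) (vends X)"
    and same_crossing: "\<forall>h\<in>H. \<forall>b b'. fst (mu (h, b)) = fst (mu (alpha h, b'))"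
    and crossing_determines_edge:
      "\<forall>h\<in>H. \<forall>h'\<in>H. \<forall>b b'. fst (mu (h, b)) = fst (mu (h', b')) \<longrightarrow> h' = h \<or> h' = alpha h"
    and arc_mu: "\<forall>h\<in>H. arc (mu (h, True)) = mu (sigma h, False)"
    and smA_mu: "\<forall>h\<in>H. \<forall>b. smA (mu (h, b)) = mu (if sg h then (alpha h, \<not> b) else (h, \<not> b))"
    and smB_mu: "\<forall>h\<in>H. \<forall>b. smB (mu (h, b)) = mu (if sg h then (h, \<not> b) else (alpha h, \<not> b))"
begin

definition crossing :: "'d \<Rightarrow> 'c" where
  "crossing h = fst (mu (h, True))"

lemma fst_mu: "h \<in> H \<Longrightarrow> fst (mu (h, b)) = crossing h"
  using same_crossing unfolding crossing_def by metis

lemma crossing_alpha: "h \<in> H \<Longrightarrow> crossing (alpha h) = crossing h"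
  using same_crossing unfolding crossing_def by metis

lemma crossing_eqD: "h \<in> H \<Longrightarrow> h' \<in> H \<Longrightarrow> crossing h = crossing h' \<Longrightarrow> h' = h \<or> h' = alpha h"
  using crossing_determines_edge unfolding crossing_def by metis

lemma mu_in: "h \<in> H \<Longrightarrow> mu (h, b) \<in> vends X"
  using bij_mu bij_betwE by fastforce

lemma crossing_image: "crossing ` H = X"
proof
  show "crossing ` H \<subseteq> X"
    using mu_in unfolding crossing_def vends_def by (auto simp: mem_Times_iff)
  show "X \<subseteq> crossing ` H"
  proof
    fix c assume "c \<in> X"
    then have "(c, 0) \<in> mu ` (H \<times> UNIV)"
      using bij_betw_imp_surj_on[OF bij_mu] unfolding vends_def by simp
    then obtain h b where "h \<in> H" "mu (h, b) = (c, 0)"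
      by auto
    then show "c \<in> crossing ` H"
      using fst_mu[of h b] by force
  qed
qed

lemma arc_arc: "z \<in> vends X \<Longrightarrow> arc (arc z) = z"
  using diagram unfolding virtual_link_diagram_def by auto

lemma smooth_smooth:
  assumes "z \<in> vends X"
  shows "smooth s (smooth s z) = z"
proof -
  obtain c i where "z = (c, i)" "i = 0 \<or> i = 1 \<or> i = 2 \<or> i = 3"
    using assms unfolding vends_def by force
  then show ?thesis
    by (auto simp: smooth_def smA_def smB_def)
qed

text \<open>The edges kept in the state \<open>s\<close>: those whose crossing is smoothed across the edge,
  i.e.\ A-smoothed if positive and B-smoothed if negative.\<close>
definition state_subgraph :: "'c set \<Rightarrow> 'd set" where
  "state_subgraph s = {h \<in> H. (crossing h \<in> s) = sg h}"

lemma smooth_mu: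
  "h \<in> H \<Longrightarrow> smooth s (mu (h, b)) = mu (if h \<in> state_subgraph s then (alpha h, \<not> b) else (h, \<not> b))"
  using smA_mu smB_mu fst_mu unfolding smooth_def state_subgraph_def by auto

end

locale medial_state = medial_diagram +
  fixes s :: "'c set"
begin

sublocale ribbon_subgraph V H vert alpha sigma sg "state_subgraph s"
  using alpha_in crossing_alpha sg_alpha
  by unfold_locales (auto simp: state_subgraph_def)

lemma state_rel_boundary_step:
  assumes "q \<in> H \<times> UNIV"
  shows "(mu q, mu (boundary_step q)) \<in> state_rel X arc s"
proof -
  obtain h b where q: "q = (h, b)" "h \<in> H"
    using assms by blast
  then have "mu (boundary_step q) = (if b then arc (mu q) else smooth s (mu q))"
    using arc_mu smooth_mu by (cases b) (auto simp: cross_def)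
  moreover have "(mu q, arc (mu q)) \<in> state_rel X arc s" "(mu q, smooth s (mu q)) \<in> state_rel X arc s"
    using mu_in[OF q(2)] q(1) unfolding state_rel_def by blast+
  ultimately show ?thesis
    by simp
qed

lemma state_rel_step_inverse:
  assumes q: "q \<in> H \<times> UNIV" and z: "(mu q, z) \<in> state_rel X arc s \<union> (state_rel X arc s)\<inverse>"
  shows "\<exists>q'\<in>H \<times> UNIV. z = mu q' \<and> (q' = boundary_step q \<or> boundary_step q' = q)"
proof -
  obtain h b where hb: "q = (h, b)" and h: "h \<in> H"
    using q by blast
  have "z = arc (mu q) \<or> z = smooth s (mu q)"
    using z mu_in[OF h] hb arc_arc smooth_smooth unfolding state_rel_def by auto
  then consider "z = mu (boundary_step q)" | "b" "z = mu (cross h, False)"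
    | "\<not> b" "z = arc (mu (h, False))"
    using hb h arc_mu smooth_mu by (cases b) (auto simp: cross_def)
  then show ?thesis
  proof cases
    case 1
    then show ?thesis
      using boundary_step_in q by blast
  next
    case 2
    then show ?thesis
      using hb h cross_in cross_cross by force
  next
    case 3
    obtain g where g: "g \<in> H" "sigma g = h"
      using bij_sigma h by (metis bij_betw_def imageE)
    then have "z = mu (g, True)"
      using 3(2) arc_mu arc_arc mu_in by metis
    then show ?thesis
      using g 3(1) hb by force
  qed
qed

lemma num_curves_eq_bc: "num_curves X arc loops s = bc V vert alpha sigma (state_subgraph s)"
proof -
  let ?R = "state_rel X arc s"
  have "card (vends X // (?R \<union> ?R\<inverse>)\<^sup>*) = card ((H \<times> UNIV) // boundary_rel)"
  proof (rule card_quotient_bij_betw[OF bij_mu orbit_rel_subset])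
    fix p assume p: "p \<in> H \<times> (UNIV :: bool set)"
    show "(?R \<union> ?R\<inverse>)\<^sup>* `` {mu p} = mu ` (boundary_rel `` {p})"
    proof
      show "(?R \<union> ?R\<inverse>)\<^sup>* `` {mu p} \<subseteq> mu ` (boundary_rel `` {p})"
        using finite_H by (intro rtrancl_class_subset_orbit_image[where \<phi> = mu and f = boundary_step,
            OF state_rel_step_inverse _ bij_boundary_step p]) auto
      show "mu ` (boundary_rel `` {p}) \<subseteq> (?R \<union> ?R\<inverse>)\<^sup>* `` {mu p}"
        by (rule orbit_image_subset_rtrancl_class[where \<phi> = mu and f = boundary_step,
            OF state_rel_boundary_step bij_boundary_step p])
    qed
  qed
  then show ?thesis
    unfolding num_curves_def loops using card_boundary_orbits by simp
qed

end

section \<open>The state sum\<close>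

lemma sum_sets_between_split:
  assumes "finite U" "c \<in> U" "c \<notin> L"
  shows "(\<Sum>Y\<in>{Y. L \<subseteq> Y \<and> Y \<subseteq> U}. g Y)
    = (\<Sum>Y\<in>{Y. L \<subseteq> Y \<and> Y \<subseteq> U - {c}}. g Y) + (\<Sum>Y\<in>{Y. insert c L \<subseteq> Y \<and> Y \<subseteq> U}. g Y)"
proof -
  let ?F0 = "{Y. L \<subseteq> Y \<and> Y \<subseteq> U - {c}}" and ?F1 = "{Y. insert c L \<subseteq> Y \<and> Y \<subseteq> U}"
  have "{Y. L \<subseteq> Y \<and> Y \<subseteq> U} = ?F0 \<union> ?F1"
    using assms(2) by blast
  moreover have "finite ?F0" "finite ?F1"
    using assms(1) by (auto intro: finite_subset[of _ "Pow U"])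
  moreover have "?F0 \<inter> ?F1 = {}"
    by blast
  ultimately show ?thesis
    by (simp add: sum.union_disjoint)
qed

context medial_diagram
begin

definition crossing_sign :: "'c \<Rightarrow> bool" where
  "crossing_sign c = sg (SOME h. h \<in> H \<and> crossing h = c)"

lemma crossing_sign_crossing: "h \<in> H \<Longrightarrow> crossing_sign (crossing h) = sg h"
proof -
  assume h: "h \<in> H"
  let ?h = "SOME h'. h' \<in> H \<and> crossing h' = crossing h"
  have "?h \<in> H \<and> crossing ?h = crossing h"
    by (rule someI_ex) (use h in blast)
  then have "?h = h \<or> ?h = alpha h"
    using crossing_eqD h by metis
  then show ?thesis
    using sg_alpha h by (auto simp: crossing_sign_def)
qed

definition edge_weight :: "'a::comm_ring_1 \<Rightarrow> 'a \<Rightarrow> 'c \<Rightarrow> bool \<Rightarrow> 'a" where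
  "edge_weight A B c kept = (if crossing_sign c = kept then A else B)"

definition marked_subgraph :: "'d set \<Rightarrow> 'd set \<Rightarrow> bool" where
  "marked_subgraph S M \<longleftrightarrow> S \<subseteq> H \<and> M \<subseteq> S \<and> (\<forall>h\<in>S. alpha h \<in> S) \<and> (\<forall>h\<in>M. alpha h \<in> M)"

text \<open>The closed form of \<open>F\<close> for the subgraph \<open>S\<close> with marked part \<open>M\<close>: a sum over the sets \<open>Y\<close>
  of crossings of kept edges, where every edge of \<open>M\<close> is kept.\<close>
definition state_sum :: "'a::comm_ring_1 \<Rightarrow> 'a \<Rightarrow> 'a \<Rightarrow> 'd set \<Rightarrow> 'd set \<Rightarrow> 'a" where
  "state_sum A B d S M = (\<Sum>Y\<in>{Y. crossing ` M \<subseteq> Y \<and> Y \<subseteq> crossing ` S}.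
      (\<Prod>c\<in>crossing ` S - crossing ` M. edge_weight A B c (c \<in> Y))
        * d ^ (bc V vert alpha sigma (H \<inter> crossing -` Y) - 1))"

lemma marked_subgraph_delete:
  assumes "marked_subgraph S M" "h \<in> S" "h \<notin> M"
  shows "marked_subgraph (S - {h, alpha h}) M"
proof -
  have SH: "S \<subseteq> H" and MS: "M \<subseteq> S" and S_closed: "\<forall>x\<in>S. alpha x \<in> S"
    and M_closed: "\<forall>x\<in>M. alpha x \<in> M"
    using assms(1) unfolding marked_subgraph_def by auto
  have h: "h \<in> H"
    using assms(2) SH by blast
  have "alpha h \<notin> M"
  proof
    assume "alpha h \<in> M"
    then have "alpha (alpha h) \<in> M"
      using M_closed by blast
    with assms(3) show False
      using alpha_alpha[OF h] by simp
  qed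
  moreover have "alpha x \<in> S - {h, alpha h}" if x: "x \<in> S - {h, alpha h}" for x
  proof -
    have "alpha (alpha x) = x"
      using x SH alpha_alpha by blast
    then have "alpha x \<noteq> h" "alpha x \<noteq> alpha h"
      using x alpha_alpha[OF h] by auto
    then show ?thesis
      using x S_closed by blast
  qed
  ultimately show ?thesis
    using SH MS M_closed assms(3) unfolding marked_subgraph_def by auto
qed

lemma marked_subgraph_mark:
  "marked_subgraph S M \<Longrightarrow> h \<in> S \<Longrightarrow> marked_subgraph S (M \<union> {h, alpha h})"
  unfolding marked_subgraph_def using alpha_alpha by (auto simp: subset_iff)

lemma preimage_crossing_image:
  assumes "marked_subgraph S M"
  shows "H \<inter> crossing -` crossing ` S = S"
proof
  show "H \<inter> crossing -` crossing ` S \<subseteq> S"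
  proof
    fix x assume "x \<in> H \<inter> crossing -` crossing ` S"
    then obtain y where y: "y \<in> S" "crossing x = crossing y" "x \<in> H"
      by auto
    moreover have "y \<in> H" "\<forall>h\<in>S. alpha h \<in> S"
      using assms y(1) unfolding marked_subgraph_def by auto
    ultimately show "x \<in> S"
      using crossing_eqD[of x y] alpha_alpha by metis
  qed
  show "S \<subseteq> H \<inter> crossing -` crossing ` S"
    using assms unfolding marked_subgraph_def by auto
qed

lemma state_sum_all_marked:
  assumes "marked_subgraph S S"
  shows "state_sum A B d S S = d ^ (bc V vert alpha sigma S - 1)"
proof -
  have "{Y. crossing ` S \<subseteq> Y \<and> Y \<subseteq> crossing ` S} = {crossing ` S}"
    by blast
  then show ?thesis
    unfolding state_sum_def
    by (simp only: sum.insert_remove finite.emptyI empty_Diff sum.empty add_0_right Diff_cancel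
        prod.empty preimage_crossing_image[OF assms] mult_1_left)
qed

lemma crossing_image_delete:
  assumes "S \<subseteq> H" "h \<in> H"
  shows "crossing ` (S - {h, alpha h}) = crossing ` S - {crossing h}"
proof
  show "crossing ` (S - {h, alpha h}) \<subseteq> crossing ` S - {crossing h}"
    using assms crossing_eqD by fastforce
  show "crossing ` S - {crossing h} \<subseteq> crossing ` (S - {h, alpha h})"
    using crossing_alpha[OF assms(2)] by auto
qed

lemma crossing_notin_marked:
  assumes "marked_subgraph S M" "h \<in> S" "h \<notin> M"
  shows "crossing h \<notin> crossing ` M"
proof
  assume "crossing h \<in> crossing ` M"
  then obtain m where "m \<in> M" "crossing m = crossing h"
    by auto
  moreover have "M \<subseteq> H" "h \<in> H" "\<forall>x\<in>M. alpha x \<in> M"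
    using assms unfolding marked_subgraph_def by auto
  ultimately show False
    using crossing_eqD[of m h] assms(3) by auto
qed

lemma state_sum_split:
  assumes marked: "marked_subgraph S M" and h: "h \<in> S" "h \<notin> M"
  shows "state_sum A B d S M =
      edge_weight A B (crossing h) False * state_sum A B d (S - {h, alpha h}) M
    + edge_weight A B (crossing h) True * state_sum A B d S (M \<union> {h, alpha h})"
proof -
  have SH: "S \<subseteq> H"
    using marked unfolding marked_subgraph_def by blast
  then have h_in: "h \<in> H"
    using h(1) by blast
  define c where "c = crossing h"
  define f where "f Y = d ^ (bc V vert alpha sigma (H \<inter> crossing -` Y) - 1)" for Y
  define w where "w Y = (\<Prod>c'\<in>crossing ` S - crossing ` M. edge_weight A B c' (c' \<in> Y))" for Y
  have c: "c \<in> crossing ` S - crossing ` M"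
    using h crossing_notin_marked[OF marked h] unfolding c_def by blast
  have finite: "finite (crossing ` S - crossing ` M)"
    using finite_subset[OF SH finite_H] by simp
  let ?F0 = "{Y. crossing ` M \<subseteq> Y \<and> Y \<subseteq> crossing ` S - {c}}"
    and ?F1 = "{Y. insert c (crossing ` M) \<subseteq> Y \<and> Y \<subseteq> crossing ` S}"
  have "state_sum A B d S M = (\<Sum>Y\<in>?F0. w Y * f Y) + (\<Sum>Y\<in>?F1. w Y * f Y)"
    unfolding state_sum_def w_def f_def
    by (rule sum_sets_between_split) (use finite_subset[OF SH finite_H] c in auto)
  moreover have "w Y = edge_weight A B c False
      * (\<Prod>c'\<in>crossing ` (S - {h, alpha h}) - crossing ` M. edge_weight A B c' (c' \<in> Y))"
    if "Y \<in> ?F0" for Y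
  proof -
    have "(crossing ` S - crossing ` M) - {c} = crossing ` (S - {h, alpha h}) - crossing ` M"
      using crossing_image_delete[OF SH h_in] unfolding c_def by auto
    moreover have "c \<notin> Y"
      using that by blast
    ultimately show ?thesis
      unfolding w_def using prod.remove[OF finite c, of "\<lambda>c'. edge_weight A B c' (c' \<in> Y)"] by simp
  qed
  moreover have "w Y = edge_weight A B c True
      * (\<Prod>c'\<in>crossing ` S - crossing ` (M \<union> {h, alpha h}). edge_weight A B c' (c' \<in> Y))"
    if "Y \<in> ?F1" for Y
  proof -
    have "(crossing ` S - crossing ` M) - {c} = crossing ` S - crossing ` (M \<union> {h, alpha h})"
      using crossing_alpha[OF h_in] unfolding c_def by auto
    moreover have "c \<in> Y"
      using that by blast
    ultimately show ?thesis
      unfolding w_def using prod.remove[OF finite c, of "\<lambda>c'. edge_weight A B c' (c' \<in> Y)"] by simp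
  qed
  moreover have "crossing ` (M \<union> {h, alpha h}) = insert c (crossing ` M)"
    using crossing_alpha[OF h_in] unfolding c_def by auto
  ultimately show ?thesis
    unfolding state_sum_def f_def crossing_image_delete[OF SH h_in] c_def[symmetric]
    by (simp add: sum_distrib_left mult.assoc)
qed

lemma edge_weight_crossing:
  "h \<in> H \<Longrightarrow> edge_weight A B (crossing h) kept = (if sg h = kept then A else B)"
  by (simp add: edge_weight_def crossing_sign_crossing)

lemma F_rel_state_sum:
  "marked_subgraph S M \<Longrightarrow> F_rel V vert alpha sigma sg A B d S M (state_sum A B d S M)"
proof (induction "card (S - M)" arbitrary: S M rule: less_induct)
  case less
  have SH: "S \<subseteq> H" and MS: "M \<subseteq> S"
    using less.prems unfolding marked_subgraph_def by auto
  show ?case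
  proof (cases "S = M")
    case True
    then show ?thesis
      using state_sum_all_marked less.prems F_rel.all_marked by metis
  next
    case False
    then obtain h where h: "h \<in> S" "h \<notin> M"
      using MS by blast
    have finite_S: "finite S"
      using finite_subset[OF SH finite_H] .
    have "card ((S - {h, alpha h}) - M) < card (S - M)" "card (S - (M \<union> {h, alpha h})) < card (S - M)"
      using finite_S h by (auto intro!: psubset_card_mono)
    then have deleted: "F_rel V vert alpha sigma sg A B d (S - {h, alpha h}) M
          (state_sum A B d (S - {h, alpha h}) M)"
      and marked: "F_rel V vert alpha sigma sg A B d S (M \<union> {h, alpha h})
          (state_sum A B d S (M \<union> {h, alpha h}))"
      using less.hyps marked_subgraph_delete[OF less.prems h] marked_subgraph_mark[OF less.prems h(1)]
      by blast+
    have "h \<in> H"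
      using h SH by blast
    note split = state_sum_split[OF less.prems h] edge_weight_crossing[OF this]
    show ?thesis
    proof (cases "sg h")
      case True
      then show ?thesis
        using F_rel.pos[OF h True deleted marked] unfolding split by simp
    next
      case False
      then show ?thesis
        using F_rel.neg[OF h False deleted marked] unfolding split by simp
    qed
  qed
qed

lemma F_rel_eq_state_sum:
  "F_rel V vert alpha sigma sg A B d S M v \<Longrightarrow> marked_subgraph S M \<Longrightarrow> v = state_sum A B d S M"
proof (induction rule: F_rel.induct)
  case (all_marked M S)
  then show ?case
    using state_sum_all_marked by metis
next
  case (pos h S M v1 v2)
  then have "h \<in> H"
    unfolding marked_subgraph_def by auto
  then show ?case
    using pos marked_subgraph_delete marked_subgraph_mark
    unfolding state_sum_split[OF pos.prems pos.hyps(1,2)] edge_weight_crossing[OF \<open>h \<in> H\<close>] by simp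
next
  case (neg h S M v1 v2)
  then have "h \<in> H"
    unfolding marked_subgraph_def by auto
  then show ?case
    using neg marked_subgraph_delete marked_subgraph_mark
    unfolding state_sum_split[OF neg.prems neg.hyps(1,2)] edge_weight_crossing[OF \<open>h \<in> H\<close>] by simp
qed

lemma marked_subgraph_unmarked: "marked_subgraph H {}"
  unfolding marked_subgraph_def using alpha_in by auto

definition kept_crossings :: "'c set \<Rightarrow> 'c set" where
  "kept_crossings s = {c \<in> X. (c \<in> s) = crossing_sign c}"

lemma kept_crossings_subset: "kept_crossings s \<subseteq> X"
  unfolding kept_crossings_def by blast

lemma kept_crossings_kept_crossings: "s \<subseteq> X \<Longrightarrow> kept_crossings (kept_crossings s) = s"
  unfolding kept_crossings_def by auto

lemma state_subgraph_eq: "H \<inter> crossing -` kept_crossings s = state_subgraph s"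
  using crossing_image crossing_sign_crossing unfolding kept_crossings_def state_subgraph_def by auto

lemma state_sum_eq_bracket: "state_sum A B d H {} = bracket X arc loops A B d"
proof -
  have finite_X: "finite X"
    using diagram unfolding virtual_link_diagram_def by simp
  have weight: "(\<Prod>c\<in>X. edge_weight A B c (c \<in> kept_crossings s)) = A ^ card s * B ^ card (X - s)"
    if "s \<subseteq> X" for s
  proof -
    have "(\<Prod>c\<in>X. edge_weight A B c (c \<in> kept_crossings s)) = (\<Prod>c\<in>X. if c \<in> s then A else B)"
      by (rule prod.cong) (auto simp: edge_weight_def kept_crossings_def)
    also have "\<dots> = A ^ card s * B ^ card (X - s)"
      using that by (simp add: prod.If_cases[OF finite_X] Int_absorb1 Diff_eq)
    finally show ?thesis .
  qed
  have "state_sum A B d H {} = (\<Sum>Y\<in>Pow X. (\<Prod>c\<in>X. edge_weight A B c (c \<in> Y))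
      * d ^ (bc V vert alpha sigma (H \<inter> crossing -` Y) - 1))"
    unfolding state_sum_def crossing_image by (simp add: Pow_def)
  also have "\<dots> = (\<Sum>s\<in>Pow X. A ^ card s * B ^ card (X - s) * d ^ (num_curves X arc loops s - 1))"
  proof (rule sum.reindex_bij_witness[of _ kept_crossings kept_crossings])
    fix s assume "s \<in> Pow X"
    then have involution: "kept_crossings (kept_crossings s) = s"
      by (simp add: kept_crossings_kept_crossings)
    interpret medial_state V H vert alpha sigma sg X arc loops mu "kept_crossings s" ..
    show "A ^ card (kept_crossings s) * B ^ card (X - kept_crossings s)
          * d ^ (num_curves X arc loops (kept_crossings s) - 1)
        = (\<Prod>c\<in>X. edge_weight A B c (c \<in> s)) * d ^ (bc V vert alpha sigma (H \<inter> crossing -` s) - 1)"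
      using weight[of "kept_crossings s"] num_curves_eq_bc state_subgraph_eq[of "kept_crossings s"]
        kept_crossings_subset unfolding involution by simp
  qed (auto simp: kept_crossings_kept_crossings kept_crossings_subset)
  also have "\<dots> = bracket X arc loops A B d"
    unfolding bracket_def ..
  finally show ?thesis .
qed

end

theorem proposition4p3:
  fixes V :: "'v set" and H :: "'d set" and vert :: "'d \<Rightarrow> 'v"
    and alpha sigma :: "'d \<Rightarrow> 'd" and sg :: "'d \<Rightarrow> bool"
    and X :: "'c set" and arc :: "'c \<times> nat \<Rightarrow> 'c \<times> nat" and loops :: nat
    and A B d :: "'a::comm_ring_1"
  assumes "signed_cyclic_graph V H vert alpha sigma sg"
    and "medial_associated V H vert alpha sigma sg X arc loops"
  shows "F_rel V vert alpha sigma sg A B d H {} (bracket X arc loops A B d)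
         \<and> (\<forall>v. F_rel V vert alpha sigma sg A B d H {} v \<longrightarrow> v = bracket X arc loops A B d)"
proof -
  obtain mu where "medial_diagram V H vert alpha sigma sg X arc loops mu"
    using assms unfolding medial_associated_def medial_diagram_def medial_diagram_axioms_def
      signed_ribbon_graph_def by blast
  then interpret medial_diagram V H vert alpha sigma sg X arc loops mu .
  show ?thesis
    using F_rel_state_sum[OF marked_subgraph_unmarked] F_rel_eq_state_sum[OF _ marked_subgraph_unmarked]
    unfolding state_sum_eq_bracket by blast
qed

end
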